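(* Let $R$ be a rack, $X$ an $R$-set and $p:X\to R$ a map with $p(x\cdot r)=p(x)\lhd r$ for all $x,r$ (i.e. a crossed module of racks $p:X\to R$). Let $N_X(R)$ and $N_R(R)$ be the cubical nerves defined below, and $p_*:N_X(R)\to N_R(R)$ the map $(x,r_1,\dots,r_n)\mapsto(p(x),r_1,\dots,r_n)$. Suppose that the rack space $B_R(R)=|N_R(R)|$ is arcwise connected and locally arcwise connected. Then the geometric realization $|p_*|:B_X(R)\to B_R(R)$ is a covering map of topological spaces.
   Context: A (right) rack is a set with a binary operation $\lhd$ such that each $x\mapsto x\lhd y$ is bijective and $(x\lhd y)\lhd z=(x\lhd z)\lhd(y\lhd z)$. An action of a rack $R$ on a set $Y$ is a family of bijections $y\mapsto y\cdot r$ with $(y\cdot r)\cdot r'=(y\cdot r')\cdot(r\lhd r')$. For such an action, the cubical set ($\Box$-set, no degeneracies) $N_Y(R)$ has as $n$-cubes the tuples $(y,r_1,\dots,r_n)\in Y\times R^n$, with face maps $\partial_i^0(y,r_1,\dots,r_n)=(y,r_1,\dots,\widehat{r_i},\dots,r_n)$ and $\partial_i^1(y,r_1,\dots,r_n)=(y\cdot r_i,\,r_1\lhd r_i,\dots,r_{i-1}\lhd r_i,\,r_{i+1},\dots,r_n)$ for $1\le i\le n$ (its 1-skeleton with 2-cubes as preferred squares is the action rack trunk: edges $y\xrightarrow{r}y\cdot r$). Its geometric realization $B_Y(R)=|N_Y(R)|=\big(\bigsqcup_n N_Y(R)_n\times[0,1]^n\big)/\!\sim$, glued along the face maps, is the rack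 space. $N_R(R)$ is the case $Y=R$ with $R$ acting on itself by $r\cdot r'=r\lhd r'$. *)

theory Defs
  imports "HOL-Analysis.Analysis"
begin

definition rack :: "('r \<Rightarrow> 'r \<Rightarrow> 'r) \<Rightarrow> bool" where
  "rack op \<longleftrightarrow> (\<forall>y. bij (\<lambda>x. op x y)) \<and>
     (\<forall>x y z. op (op x y) z = op (op x z) (op y z))"

definition rack_action :: "('r \<Rightarrow> 'r \<Rightarrow> 'r) \<Rightarrow> ('y \<Rightarrow> 'r \<Rightarrow> 'y) \<Rightarrow> bool" where
  "rack_action op act \<longleftrightarrow> (\<forall>r. bij (\<lambda>y. act y r)) \<and>
     (\<forall>y r r'. act (act y r) r' = act (act y r') (op r r'))"

text \<open>An n-cube (y, r_1, ..., r_n) is represented as (y, [r_1, ..., r_n]); indices are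
  0-based, so face index i (0 \<le> i < n) corresponds to the paper's index i+1.\<close>

definition face0 :: "nat \<Rightarrow> 'y \<times> 'r list \<Rightarrow> 'y \<times> 'r list" where
  "face0 i c = (fst c, take i (snd c) @ drop (Suc i) (snd c))"

definition face1 :: "('r \<Rightarrow> 'r \<Rightarrow> 'r) \<Rightarrow> ('y \<Rightarrow> 'r \<Rightarrow> 'y) \<Rightarrow> nat
    \<Rightarrow> 'y \<times> 'r list \<Rightarrow> 'y \<times> 'r list" where
  "face1 op act i c =
     (act (fst c) (snd c ! i),
      map (\<lambda>r. op r (snd c ! i)) (take i (snd c)) @ drop (Suc i) (snd c))"

text \<open>The standard n-cube [0,1]^n, realised inside nat \<Rightarrow> real (coordinates \<ge> n are 0),
  with the subspace topology of the product topology (homeomorphic to [0,1]^n).\<close>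
definition cube :: "nat \<Rightarrow> (nat \<Rightarrow> real) set" where
  "cube n = {t. (\<forall>i<n. 0 \<le> t i \<and> t i \<le> 1) \<and> (\<forall>i\<ge>n. t i = 0)}"

definition cube_top :: "nat \<Rightarrow> (nat \<Rightarrow> real) topology" where
  "cube_top n = subtopology (product_topology (\<lambda>_. euclideanreal) UNIV) (cube n)"

text \<open>Deleting the i-th coordinate (inverse of the coface inclusion inserting a coordinate).\<close>
definition del_coord :: "nat \<Rightarrow> (nat \<Rightarrow> real) \<Rightarrow> (nat \<Rightarrow> real)" where
  "del_coord i t = (\<lambda>j. if j < i then t j else t (Suc j))"

definition cells_top :: "(('y \<times> 'r list) \<times> (nat \<Rightarrow> real)) topology" where
  "cells_top = sum_topology (\<lambda>c. cube_top (length (snd c))) UNIV"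

definition glue :: "('r \<Rightarrow> 'r \<Rightarrow> 'r) \<Rightarrow> ('y \<Rightarrow> 'r \<Rightarrow> 'y)
    \<Rightarrow> ('y \<times> 'r list) \<times> (nat \<Rightarrow> real) \<Rightarrow> ('y \<times> 'r list) \<times> (nat \<Rightarrow> real) \<Rightarrow> bool" where
  "glue op act a b \<longleftrightarrow> snd a \<in> cube (length (snd (fst a))) \<and>
     (\<exists>i < length (snd (fst a)).
        (snd a i = 0 \<and> b = (face0 i (fst a), del_coord i (snd a))) \<or>
        (snd a i = 1 \<and> b = (face1 op act i (fst a), del_coord i (snd a))))"

definition nerve_equiv :: "('r \<Rightarrow> 'r \<Rightarrow> 'r) \<Rightarrow> ('y \<Rightarrow> 'r \<Rightarrow> 'y)
    \<Rightarrow> ('y \<times> 'r list) \<times> (nat \<Rightarrow> real) \<Rightarrow> ('y \<times> 'r list) \<times> (nat \<Rightarrow> real) \<Rightarrow> bool" where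
  "nerve_equiv op act = (\<lambda>a b. glue op act a b \<or> glue op act b a)\<^sup>*\<^sup>*"

text \<open>Quotient topology of X by a relation E (equivalence classes are the points).\<close>
definition eq_class :: "'a topology \<Rightarrow> ('a \<Rightarrow> 'a \<Rightarrow> bool) \<Rightarrow> 'a \<Rightarrow> 'a set" where
  "eq_class X E x = {y \<in> topspace X. E x y}"

definition quotient_topology :: "'a topology \<Rightarrow> ('a \<Rightarrow> 'a \<Rightarrow> bool) \<Rightarrow> 'a set topology" where
  "quotient_topology X E = topology (\<lambda>U. U \<subseteq> eq_class X E ` topspace X \<and>
       openin X {x \<in> topspace X. eq_class X E x \<in> U})"

lemma istopology_quotient:
  "istopology (\<lambda>U. U \<subseteq> eq_class X E ` topspace X \<and>
       openin X {x \<in> topspace X. eq_class X E x \<in> U})"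
proof -
  have 1: "{x \<in> topspace X. eq_class X E x \<in> S \<inter> T} =
           {x \<in> topspace X. eq_class X E x \<in> S} \<inter> {x \<in> topspace X. eq_class X E x \<in> T}" for S T
    by auto
  have 2: "{x \<in> topspace X. eq_class X E x \<in> \<Union>K} =
           (\<Union>U\<in>K. {x \<in> topspace X. eq_class X E x \<in> U}) \<inter> topspace X" for K
    by auto
  show ?thesis
    unfolding istopology_def 1 2 by blast
qed

definition rack_space :: "('r \<Rightarrow> 'r \<Rightarrow> 'r) \<Rightarrow> ('y \<Rightarrow> 'r \<Rightarrow> 'y)
    \<Rightarrow> (('y \<times> 'r list) \<times> (nat \<Rightarrow> real)) set topology" where
  "rack_space op act = quotient_topology cells_top (nerve_equiv op act)"

definition realize_map :: "('r \<Rightarrow> 'r \<Rightarrow> 'r) \<Rightarrow> ('z \<Rightarrow> 'r \<Rightarrow> 'z) \<Rightarrow> ('y \<Rightarrow> 'z)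
    \<Rightarrow> (('y \<times> 'r list) \<times> (nat \<Rightarrow> real)) set \<Rightarrow> (('z \<times> 'r list) \<times> (nat \<Rightarrow> real)) set" where
  "realize_map op act' f C =
     (let a = (SOME a. a \<in> C) in
      eq_class cells_top (nerve_equiv op act') ((f (fst (fst a)), snd (fst a)), snd a))"

text \<open>Covering map in the sense of Hatcher (every point of the base has an open evenly covered
  neighbourhood; empty fibres allowed), for abstract topologies.\<close>
definition covering_map :: "'a topology \<Rightarrow> 'b topology \<Rightarrow> ('a \<Rightarrow> 'b) \<Rightarrow> bool" where
  "covering_map E B p \<longleftrightarrow> continuous_map E B p \<and>
     (\<forall>b \<in> topspace B. \<exists>T. b \<in> T \<and> openin B T \<and>
        (\<exists>\<V>. \<Union>\<V> = {e \<in> topspace E. p e \<in> T} \<and>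
             (\<forall>U \<in> \<V>. openin E U) \<and> pairwise disjnt \<V> \<and>
             (\<forall>U \<in> \<V>. \<exists>q. homeomorphic_maps (subtopology E U) (subtopology B T) p q)))"

end

theory Submission
  imports Defs
begin

text \<open>Fix \<open>0 < e < 1/2\<close> and push every coordinate of a point of a cube that lies within \<open>e\<close>
  of \<open>0\<close> or \<open>1\<close> onto the corresponding face. The resulting face, together with the remaining
  coordinates, is unchanged by the face identifications and hence is an invariant of points of
  the rack space. Every point of \<open>B_R(R)\<close> has a representative \<open>(c, t)\<close> with all coordinates
  of \<open>t\<close> in \<open>(0, 1)\<close>; for small \<open>e\<close> the points whose rounded face is \<open>c\<close> and whose remaining
  coordinates are \<open>e\<close>-close to \<open>t\<close> form an open neighbourhood \<open>T\<close>. Over \<open>T\<close> the points of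
  \<open>B_X(R)\<close> split, according to the vertex of their rounded face, into disjoint open sheets
  indexed by the fibre of \<open>p\<close> over the vertex of \<open>c\<close>. As the maps \<open>y \<mapsto> y \<cdot> r\<close> are bijective,
  the vertex of an iterated face determines the vertex it started from, so by equivariance of
  \<open>p\<close> each sheet is mapped homeomorphically onto \<open>T\<close>.\<close>

definition remove_nth :: "nat \<Rightarrow> 'a list \<Rightarrow> 'a list" where
  "remove_nth i xs = take i xs @ drop (Suc i) xs"

lemma remove_nth_Cons_0 [simp]: "remove_nth 0 (x # xs) = xs"
  by (simp add: remove_nth_def)

lemma remove_nth_Cons_Suc [simp]: "remove_nth (Suc i) (x # xs) = x # remove_nth i xs"
  by (simp add: remove_nth_def)

lemma length_remove_nth [simp]: "i < length xs \<Longrightarrow> length (remove_nth i xs) = length xs - 1"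
  by (simp add: remove_nth_def)

lemma map_remove_nth: "map f (remove_nth i xs) = remove_nth i (map f xs)"
  by (simp add: remove_nth_def take_map drop_map)

lemma filter_remove_nth:
  assumes "i < length xs" "\<not> P (xs ! i)"
  shows "filter P (remove_nth i xs) = filter P xs"
proof -
  have "xs = take i xs @ xs ! i # drop (Suc i) xs"
    using assms(1) by (simp add: id_take_nth_drop)
  then have "filter P xs = filter P (take i xs) @ filter P (drop (Suc i) xs)"
    using assms(2) by (metis filter.simps(2) filter_append)
  then show ?thesis by (simp add: remove_nth_def)
qed

lemma face0_eq: "face0 i (y, rs) = (y, remove_nth i rs)"
  by (simp add: face0_def remove_nth_def)

lemma length_face0: "i < length (snd c) \<Longrightarrow> length (snd (face0 i c)) = length (snd c) - 1"
  by (simp add: face0_def)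

lemma length_face1: "i < length (snd c) \<Longrightarrow> length (snd (face1 op act i c)) = length (snd c) - 1"
  by (simp add: face1_def)

lemma rack_action_self: "rack op \<Longrightarrow> rack_action op op"
  by (simp add: rack_def rack_action_def)

section \<open>Iterated faces\<close>

text \<open>A pattern assigns to each coordinate of a cube either a face (\<open>Some False\<close> for the
  0-face, \<open>Some True\<close> for the 1-face) or \<open>None\<close>; \<open>collapse\<close> passes to the corresponding
  iterated face, taking the faces from the first coordinate on.\<close>

fun collapse_vertex :: "('y \<Rightarrow> 'r \<Rightarrow> 'y) \<Rightarrow> 'y \<Rightarrow> 'r list \<Rightarrow> bool option list \<Rightarrow> 'y" where
  "collapse_vertex act y (r # rs) (q # pat) =
     collapse_vertex act (if q = Some True then act y r else y) rs pat"
| "collapse_vertex act y _ _ = y"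

fun collapse_labels :: "('r \<Rightarrow> 'r \<Rightarrow> 'r) \<Rightarrow> 'r list \<Rightarrow> bool option list \<Rightarrow> 'r list" where
  "collapse_labels op (r # rs) (q # pat) =
     (if q = None then collapse_vertex op r rs pat # collapse_labels op rs pat
      else collapse_labels op rs pat)"
| "collapse_labels op _ _ = []"

definition collapse :: "('r \<Rightarrow> 'r \<Rightarrow> 'r) \<Rightarrow> ('y \<Rightarrow> 'r \<Rightarrow> 'y) \<Rightarrow> bool option list
    \<Rightarrow> 'y \<times> 'r list \<Rightarrow> 'y \<times> 'r list" where
  "collapse op act pat c = (collapse_vertex act (fst c) (snd c) pat, collapse_labels op (snd c) pat)"

lemma collapse_vertex_face0:
  "i < length rs \<Longrightarrow> length pat = length rs \<Longrightarrow> pat ! i = Some False \<Longrightarrow>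
   collapse_vertex act y (remove_nth i rs) (remove_nth i pat) = collapse_vertex act y rs pat"
proof (induction i arbitrary: y rs pat)
  case 0
  then show ?case by (cases rs; cases pat) auto
next
  case (Suc i)
  then show ?case by (cases rs; cases pat) auto
qed

lemma collapse_labels_face0:
  "i < length rs \<Longrightarrow> length pat = length rs \<Longrightarrow> pat ! i = Some False \<Longrightarrow>
   collapse_labels op (remove_nth i rs) (remove_nth i pat) = collapse_labels op rs pat"
proof (induction i arbitrary: rs pat)
  case 0
  then show ?case by (cases rs; cases pat) auto
next
  case (Suc i)
  then show ?case by (cases rs; cases pat) (auto simp: collapse_vertex_face0)
qed

lemma collapse_face0:
  assumes "i < length (snd c)" "length pat = length (snd c)" "pat ! i = Some False"
  shows "collapse op act (remove_nth i pat) (face0 i c) = collapse op act pat c"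
proof -
  obtain y rs where "c = (y, rs)" by fastforce
  with assms show ?thesis
    by (simp add: collapse_def face0_eq collapse_vertex_face0 collapse_labels_face0)
qed

text \<open>The action axiom is exactly what lets a 1-face in coordinate \<open>i\<close> be moved past the
  1-faces taken earlier.\<close>

lemma collapse_vertex_face1:
  assumes "rack_action op act"
  shows "i < length rs \<Longrightarrow> length pat = length rs \<Longrightarrow> pat ! i = Some True \<Longrightarrow>
    collapse_vertex act (act y (rs ! i))
      (map (\<lambda>r. op r (rs ! i)) (take i rs) @ drop (Suc i) rs) (remove_nth i pat)
    = collapse_vertex act y rs pat"
proof (induction i arbitrary: y rs pat)
  case 0
  then show ?case by (cases rs; cases pat) auto
next
  case (Suc i)
  then obtain r rs' q pat' where rs: "rs = r # rs'" and pat: "pat = q # pat'"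
    by (cases rs; cases pat) auto
  have "act (act y r) (rs' ! i) = act (act y (rs' ! i)) (op r (rs' ! i))"
    using assms unfolding rack_action_def by blast
  then show ?case
    using Suc.prems Suc.IH[of rs' pat' y] Suc.IH[of rs' pat' "act y r"] unfolding rs pat by auto
qed

lemma collapse_labels_face1:
  assumes "rack op"
  shows "i < length rs \<Longrightarrow> length pat = length rs \<Longrightarrow> pat ! i = Some True \<Longrightarrow>
    collapse_labels op (map (\<lambda>r. op r (rs ! i)) (take i rs) @ drop (Suc i) rs) (remove_nth i pat)
    = collapse_labels op rs pat"
proof (induction i arbitrary: rs pat)
  case 0
  then show ?case by (cases rs; cases pat) auto
next
  case (Suc i)
  then obtain r rs' q pat' where rs: "rs = r # rs'" and pat: "pat = q # pat'"
    by (cases rs; cases pat) auto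
  show ?case
    using Suc.prems Suc.IH[of rs' pat']
      collapse_vertex_face1[OF rack_action_self[OF assms], of i rs' pat' r]
    unfolding rs pat by auto
qed

lemma collapse_face1:
  assumes "rack op" "rack_action op act"
    and "i < length (snd c)" "length pat = length (snd c)" "pat ! i = Some True"
  shows "collapse op act (remove_nth i pat) (face1 op act i c) = collapse op act pat c"
proof -
  obtain y rs where "c = (y, rs)" by fastforce
  with assms show ?thesis
    by (simp add: collapse_def face1_def collapse_vertex_face1 collapse_labels_face1)
qed

lemma collapse_vertex_equivariant:
  assumes "\<And>x r. p (act x r) = op (p x) r"
  shows "p (collapse_vertex act x rs pat) = collapse_vertex op (p x) rs pat"
proof (induction rs arbitrary: x pat)
  case (Cons r rs)
  then show ?case by (cases pat) (simp_all add: assms)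
qed simp

lemma bij_collapse_vertex:
  assumes "rack_action op act"
  shows "bij (\<lambda>y. collapse_vertex act y rs pat)"
proof (induction rs arbitrary: pat)
  case (Cons r rs)
  show ?case
  proof (cases pat)
    case (Cons q pat')
    have "bij (\<lambda>y. if q = Some True then act y r else y)"
      using assms by (cases "q = Some True") (simp_all add: rack_action_def bij_id[unfolded id_def])
    with Cons.IH have "bij ((\<lambda>y. collapse_vertex act y rs pat') \<circ> (\<lambda>y. if q = Some True then act y r else y))"
      by (intro bij_comp)
    then show ?thesis by (simp add: Cons o_def)
  qed (simp add: bij_id[unfolded id_def])
qed (simp add: bij_id[unfolded id_def])

lemma collapse_vertex_replicate_None: "collapse_vertex act y rs (replicate (length rs) None) = y"
  by (induction rs arbitrary: y) auto

lemma collapse_replicate_None: "collapse op act (replicate (length rs) None) (y, rs) = (y, rs)"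
proof -
  have "collapse_labels op rs (replicate (length rs) None) = rs"
    by (induction rs) (auto simp: collapse_vertex_replicate_None)
  then show ?thesis by (simp add: collapse_def collapse_vertex_replicate_None)
qed

section \<open>Cells and the quotient topology\<close>

abbreviation cell_dim :: "('y \<times> 'r list) \<times> 'b \<Rightarrow> nat" where
  "cell_dim a \<equiv> length (snd (fst a))"

lemma nerve_equiv_equivp: "equivp (nerve_equiv op act)"
  unfolding nerve_equiv_def by (rule equivp_rtranclp) (simp add: symp_def)

lemma topspace_cube_top [simp]: "topspace (cube_top n) = cube n"
  by (simp add: cube_top_def)

lemma topspace_cells_top: "topspace cells_top = {a. snd a \<in> cube (cell_dim a)}"
  by (auto simp: cells_top_def)

lemma openin_cells_top:
  "openin cells_top U \<longleftrightarrow> U \<subseteq> topspace cells_top \<and> (\<forall>c. openin (cube_top (length (snd c))) {u. (c, u) \<in> U})"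
  by (simp add: cells_top_def openin_sum_topology topspace_cells_top)

lemma del_coord_in_cube: "u \<in> cube n \<Longrightarrow> i < n \<Longrightarrow> del_coord i u \<in> cube (n - 1)"
  by (auto simp: cube_def del_coord_def)

lemma glue_in_topspace: "glue op act a b \<Longrightarrow> a \<in> topspace cells_top \<and> b \<in> topspace cells_top"
  unfolding glue_def topspace_cells_top
  using del_coord_in_cube[of "snd a" "cell_dim a"] by (auto simp: length_face0 length_face1)

lemma nerve_equiv_in_topspace:
  "nerve_equiv op act a b \<Longrightarrow> a \<in> topspace cells_top \<Longrightarrow> b \<in> topspace cells_top"
  unfolding nerve_equiv_def by (induction rule: rtranclp_induct) (auto dest: glue_in_topspace)

lemma openin_quotient_topology:
  "openin (quotient_topology X E) U \<longleftrightarrow>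
     U \<subseteq> eq_class X E ` topspace X \<and> openin X {x \<in> topspace X. eq_class X E x \<in> U}"
  unfolding quotient_topology_def by (simp only: topology_inverse'[OF istopology_quotient])

lemma topspace_quotient_topology: "topspace (quotient_topology X E) = eq_class X E ` topspace X"
proof -
  have "{x \<in> topspace X. eq_class X E x \<in> eq_class X E ` topspace X} = topspace X"
    by auto
  then have "openin (quotient_topology X E) (eq_class X E ` topspace X)"
    by (simp add: openin_quotient_topology)
  then have "eq_class X E ` topspace X \<subseteq> topspace (quotient_topology X E)"
    by (rule openin_subset)
  moreover have "topspace (quotient_topology X E) \<subseteq> eq_class X E ` topspace X"
    using openin_topspace[of "quotient_topology X E"] unfolding openin_quotient_topology by blast
  ultimately show ?thesis by blast
qed

lemma quotient_map_eq_class: "quotient_map X (quotient_topology X E) (eq_class X E)"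
  unfolding quotient_map_def topspace_quotient_topology by (auto simp: openin_quotient_topology)

lemma eq_class_eq_iff:
  assumes "equivp E" "x \<in> topspace X" "y \<in> topspace X"
  shows "eq_class X E x = eq_class X E y \<longleftrightarrow> E x y"
proof
  assume "eq_class X E x = eq_class X E y"
  then have "y \<in> eq_class X E x"
    using assms by (simp add: eq_class_def equivp_reflp)
  then show "E x y" by (simp add: eq_class_def)
next
  assume "E x y"
  then have "E x z \<longleftrightarrow> E y z" for z
    using assms(1) by (meson equivp_symp equivp_transp)
  then show "eq_class X E x = eq_class X E y" by (simp add: eq_class_def)
qed

lemma mem_eq_class_self: "equivp E \<Longrightarrow> x \<in> topspace X \<Longrightarrow> x \<in> eq_class X E x"
  by (simp add: eq_class_def equivp_reflp)

lemma some_mem_eq_class: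
  assumes "equivp E" "x \<in> topspace X"
  shows "(SOME y. y \<in> eq_class X E x) \<in> topspace X \<and> E x (SOME y. y \<in> eq_class X E x)"
  using someI[of "\<lambda>y. y \<in> eq_class X E x", OF mem_eq_class_self[OF assms]]
  by (simp add: eq_class_def)

lemma eq_class_preimage_image:
  assumes "equivp E" "S \<subseteq> topspace X" "\<And>a b. a \<in> S \<Longrightarrow> E a b \<Longrightarrow> b \<in> topspace X \<Longrightarrow> b \<in> S"
  shows "{x \<in> topspace X. eq_class X E x \<in> eq_class X E ` S} = S"
proof -
  have "x \<in> S" if "x \<in> topspace X" "a \<in> S" "eq_class X E x = eq_class X E a" for x a
    using that assms eq_class_eq_iff[OF assms(1)] by (metis equivp_symp subsetD)
  then show ?thesis using assms(2) by blast
qed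

lemma openin_quotient_topology_image:
  assumes "equivp E" "S \<subseteq> topspace X" "\<And>a b. a \<in> S \<Longrightarrow> E a b \<Longrightarrow> b \<in> topspace X \<Longrightarrow> b \<in> S"
  shows "openin (quotient_topology X E) (eq_class X E ` S) \<longleftrightarrow> openin X S"
  using assms(2) by (auto simp: openin_quotient_topology eq_class_preimage_image[OF assms])

lemma exists_interior_representative:
  "a \<in> topspace cells_top \<Longrightarrow>
   \<exists>a'. nerve_equiv op act a a' \<and> a' \<in> topspace cells_top \<and> (\<forall>j<cell_dim a'. 0 < snd a' j \<and> snd a' j < 1)"
proof (induction "cell_dim a" arbitrary: a rule: less_induct)
  case less
  obtain c u where a: "a = (c, u)" by fastforce
  define n where "n = length (snd c)"
  have u: "u \<in> cube n" using less.prems a by (simp add: topspace_cells_top n_def)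
  show ?case
  proof (cases "\<exists>j<n. u j = 0 \<or> u j = 1")
    case False
    then have "\<forall>j<n. 0 < u j \<and> u j < 1" using u unfolding cube_def by force
    moreover have "nerve_equiv op act a a"
      by (simp add: nerve_equiv_def)
    ultimately show ?thesis using less.prems by (intro exI[of _ a]) (simp add: a n_def)
  next
    case True
    then obtain j where j: "j < n" "u j = 0 \<or> u j = 1" by blast
    define b where "b = (if u j = 0 then face0 j c else face1 op act j c, del_coord j u)"
    have glue: "glue op act a b" unfolding glue_def b_def a using j u n_def by auto
    have "cell_dim b < cell_dim a"
      using j by (simp add: b_def a n_def length_face0 length_face1)
    then obtain a' where "nerve_equiv op act b a'" "a' \<in> topspace cells_top"
      "\<forall>j<cell_dim a'. 0 < snd a' j \<and> snd a' j < 1"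
      using less.hyps glue_in_topspace[OF glue] by blast
    moreover have "nerve_equiv op act a b"
      unfolding nerve_equiv_def using glue by (intro r_into_rtranclp) simp
    ultimately show ?thesis
      by (meson equivp_transp nerve_equiv_equivp)
  qed
qed

lemma exists_margin:
  fixes k :: nat
  assumes "\<forall>j<k. 0 < t j \<and> t j < (1::real)"
  shows "\<exists>e. 0 < e \<and> e < 1/2 \<and> (\<forall>j<k. 2 * e \<le> t j \<and> t j \<le> 1 - 2 * e)"
proof -
  define M where "M = insert (1/4) ((\<lambda>j. min (t j) (1 - t j) / 2) ` {..<k})"
  have M: "finite M" "M \<noteq> {}" by (simp_all add: M_def)
  have "0 < Min M" using M assms by (auto simp: Min_gr_iff M_def)
  moreover have "Min M < 1/2"
    using Min_le[OF M(1), of "1/4"] by (simp add: M_def)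
  moreover have "2 * Min M \<le> t j \<and> t j \<le> 1 - 2 * Min M" if "j < k" for j
  proof -
    have "Min M \<le> min (t j) (1 - t j) / 2" using M that by (intro Min_le) (auto simp: M_def)
    then show ?thesis by simp
  qed
  ultimately show ?thesis by blast
qed

section \<open>Rounding to faces\<close>

definition round_coord :: "real \<Rightarrow> real \<Rightarrow> bool option" where
  "round_coord e x = (if x < e then Some False else if 1 - e < x then Some True else None)"

definition coord_list :: "(nat \<Rightarrow> real) \<Rightarrow> nat \<Rightarrow> real list" where
  "coord_list u n = map u [0..<n]"

definition round_pattern :: "real \<Rightarrow> (nat \<Rightarrow> real) \<Rightarrow> nat \<Rightarrow> bool option list" where
  "round_pattern e u n = map (round_coord e) (coord_list u n)"

definition kept_coords :: "real \<Rightarrow> (nat \<Rightarrow> real) \<Rightarrow> nat \<Rightarrow> real list" where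
  "kept_coords e u n = filter (\<lambda>x. round_coord e x = None) (coord_list u n)"

definition rounded_cell :: "('r \<Rightarrow> 'r \<Rightarrow> 'r) \<Rightarrow> ('y \<Rightarrow> 'r \<Rightarrow> 'y) \<Rightarrow> real
    \<Rightarrow> ('y \<times> 'r list) \<times> (nat \<Rightarrow> real) \<Rightarrow> ('y \<times> 'r list) \<times> real list" where
  "rounded_cell op act e a =
     (collapse op act (round_pattern e (snd a) (cell_dim a)) (fst a), kept_coords e (snd a) (cell_dim a))"

lemma length_round_pattern [simp]: "length (round_pattern e u n) = n"
  by (simp add: round_pattern_def coord_list_def)

lemma nth_round_pattern [simp]: "i < n \<Longrightarrow> round_pattern e u n ! i = round_coord e (u i)"
  by (simp add: round_pattern_def coord_list_def)

lemma coord_list_del_coord: "i < n \<Longrightarrow> coord_list (del_coord i u) (n - 1) = remove_nth i (coord_list u n)"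
  by (rule nth_equalityI) (auto simp: coord_list_def remove_nth_def del_coord_def nth_append min_def)

lemma kept_coords_eq: "kept_coords e u n = map u (filter (\<lambda>j. round_coord e (u j) = None) [0..<n])"
  by (simp add: kept_coords_def coord_list_def filter_map o_def)

lemma glue_rounded_cell:
  assumes "rack op" "rack_action op act" "0 < e" "e < 1/2" and "glue op act a b"
  shows "rounded_cell op act e b = rounded_cell op act e a"
proof -
  obtain c u where a: "a = (c, u)" by fastforce
  define n where "n = length (snd c)"
  from assms(5) obtain i where i: "i < n"
    and cases: "(u i = 0 \<and> b = (face0 i c, del_coord i u)) \<or> (u i = 1 \<and> b = (face1 op act i c, del_coord i u))"
    unfolding glue_def a n_def by auto
  obtain m where n: "n = Suc m" using i by (cases n) auto
  have coords: "coord_list (del_coord i u) m = remove_nth i (coord_list u n)"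
    using coord_list_del_coord[OF i] by (simp add: n)
  have pattern: "round_pattern e (del_coord i u) m = remove_nth i (round_pattern e u n)"
    by (simp add: round_pattern_def coords map_remove_nth)
  have kept: "kept_coords e (del_coord i u) m = kept_coords e u n" if "u i = 0 \<or> u i = 1"
    using i that assms(3,4) unfolding kept_coords_def coords
    by (intro filter_remove_nth) (auto simp: coord_list_def round_coord_def)
  from cases show ?thesis
  proof
    assume u: "u i = 0 \<and> b = (face0 i c, del_coord i u)"
    then have "round_pattern e u n ! i = Some False"
      using i assms(3) by (simp add: round_coord_def)
    with u i show ?thesis
      by (simp add: rounded_cell_def a n_def[symmetric] n length_face0 pattern kept collapse_face0)
  next
    assume u: "u i = 1 \<and> b = (face1 op act i c, del_coord i u)"
    then have "round_pattern e u n ! i = Some True"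
      using i assms(3,4) by (simp add: round_coord_def)
    with u i assms(1,2) show ?thesis
      by (simp add: rounded_cell_def a n_def[symmetric] n length_face1 pattern kept collapse_face1)
  qed
qed

lemma nerve_equiv_rounded_cell:
  assumes "rack op" "rack_action op act" "0 < e" "e < 1/2"
  shows "nerve_equiv op act a b \<Longrightarrow> rounded_cell op act e b = rounded_cell op act e a"
  unfolding nerve_equiv_def
  by (induction rule: rtranclp_induct) (auto dest: glue_rounded_cell[OF assms])

section \<open>Charts\<close>

definition near_coords :: "real \<Rightarrow> (nat \<Rightarrow> real) \<Rightarrow> nat \<Rightarrow> real list \<Rightarrow> bool" where
  "near_coords e t k xs \<longleftrightarrow> length xs = k \<and> (\<forall>m<k. \<bar>t m - xs ! m\<bar> < e)"

lemma openin_cube_top_box: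
  assumes "\<And>j. open (I j)" "\<And>j. n \<le> j \<Longrightarrow> I j = UNIV"
  shows "openin (cube_top n) (cube n \<inter> {u. \<forall>j. u j \<in> I j})"
proof -
  have "openin (product_topology (\<lambda>_. euclideanreal) UNIV) (\<Pi>\<^sub>E j\<in>UNIV. I j)"
  proof (rule product_topology_basis)
    show "openin euclideanreal (I j)" for j
      using assms(1) by simp
    have "{j. I j \<noteq> topspace euclideanreal} \<subseteq> {..<n}"
      using assms(2) not_less by auto
    then show "finite {j. I j \<noteq> topspace euclideanreal}"
      using finite_subset by blast
  qed
  moreover have "(\<Pi>\<^sub>E j\<in>UNIV. I j) = {u. \<forall>j. u j \<in> I j}"
    by (simp add: PiE_UNIV_domain Pi_def)
  ultimately show ?thesis
    unfolding cube_top_def by (metis openin_subtopology_Int2)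
qed

lemma round_coord_near:
  assumes "\<bar>t - x\<bar> < e" "2 * e \<le> t" "t \<le> 1 - 2 * e"
  shows "round_coord e x = None"
  using assms by (simp add: round_coord_def abs_less_iff)

lemma round_pattern_locally_constant:
  assumes e: "0 < e" "e < 1/2" and t: "\<forall>m<k. 2 * e \<le> t m \<and> t m \<le> 1 - 2 * e"
    and u0: "u0 \<in> cube n" "near_coords e t k (kept_coords e u0 n)"
  shows "\<exists>W. openin (cube_top n) W \<and> u0 \<in> W \<and>
    (\<forall>u\<in>W. round_pattern e u n = round_pattern e u0 n \<and> near_coords e t k (kept_coords e u n))"
proof -
  define js where "js = filter (\<lambda>j. round_coord e (u0 j) = None) [0..<n]"
  have k: "length js = k" and near0: "\<And>m. m < k \<Longrightarrow> \<bar>t m - u0 (js ! m)\<bar> < e"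
    using u0(2) by (auto simp: near_coords_def kept_coords_eq js_def[symmetric])
  have js_lt: "js ! m < n" if "m < k" for m
    using nth_mem[of m js] that k by (simp add: js_def)
  define I where "I j = (if n \<le> j then UNIV else if u0 j < e then {..<e} else if 1 - e < u0 j then {1 - e<..}
      else \<Inter>m\<in>{m. m < k \<and> js ! m = j}. ball (t m) e)" for j
  have "open (I j)" for j
  proof -
    have "open (\<Inter>m\<in>{m. m < k \<and> js ! m = j}. ball (t m) e)"
      by (intro open_INT) auto
    then show ?thesis by (simp add: I_def)
  qed
  then have "openin (cube_top n) (cube n \<inter> {u. \<forall>j. u j \<in> I j})"
    by (rule openin_cube_top_box) (simp add: I_def)
  moreover have "u0 \<in> cube n \<inter> {u. \<forall>j. u j \<in> I j}"
    using u0(1) near0 by (auto simp: I_def dist_real_def)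
  moreover have "round_pattern e u n = round_pattern e u0 n \<and> near_coords e t k (kept_coords e u n)"
    if u: "u \<in> cube n \<inter> {u. \<forall>j. u j \<in> I j}" for u
  proof -
    have uI: "u j \<in> I j" for j
      using u by blast
    have near: "\<bar>t m - u (js ! m)\<bar> < e" if "m < k" for m
    proof -
      have "round_coord e (u0 (js ! m)) = None"
        using that k nth_mem[of m js] by (auto simp: js_def)
      then show ?thesis
        using uI[of "js ! m"] that js_lt[OF that]
        by (auto simp: I_def round_coord_def dist_real_def split: if_splits)
    qed
    have same: "round_coord e (u j) = round_coord e (u0 j)" if "j < n" for j
    proof (cases "round_coord e (u0 j)")
      case None
      then have "j \<in> set js" using that by (simp add: js_def)
      then obtain m where "m < k" "js ! m = j" using k by (metis in_set_conv_nth)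
      then show ?thesis
        using None near t round_coord_near by metis
    next
      case (Some b)
      then have "u0 j < e \<or> 1 - e < u0 j" by (simp add: round_coord_def split: if_splits)
      then show ?thesis
        using uI[of j] that e by (auto simp: I_def round_coord_def)
    qed
    then have "round_pattern e u n = round_pattern e u0 n"
      by (simp add: round_pattern_def coord_list_def)
    moreover have "kept_coords e u n = map u js"
      unfolding kept_coords_eq js_def using same by (intro arg_cong[where f = "map u"] filter_cong) auto
    ultimately show ?thesis using k near by (simp add: near_coords_def)
  qed
  ultimately show ?thesis by blast
qed

definition chart :: "('r \<Rightarrow> 'r \<Rightarrow> 'r) \<Rightarrow> ('y \<Rightarrow> 'r \<Rightarrow> 'y) \<Rightarrow> real \<Rightarrow> (nat \<Rightarrow> real)
    \<Rightarrow> 'y \<times> 'r list \<Rightarrow> (('y \<times> 'r list) \<times> (nat \<Rightarrow> real)) set" where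
  "chart op act e t c = {a \<in> topspace cells_top. fst (rounded_cell op act e a) = c \<and>
     near_coords e t (length (snd c)) (snd (rounded_cell op act e a))}"

lemma chart_subset_topspace: "chart op act e t c \<subseteq> topspace cells_top"
  by (simp add: chart_def)

lemma chart_closed_nerve_equiv:
  assumes "rack op" "rack_action op act" "0 < e" "e < 1/2"
    and "a \<in> chart op act e t c" "nerve_equiv op act a b"
  shows "b \<in> chart op act e t c"
  using assms nerve_equiv_rounded_cell[OF assms(1-4,6)] nerve_equiv_in_topspace[OF assms(6)]
  by (simp add: chart_def)

lemma mem_chart_self:
  assumes "(c, t) \<in> topspace cells_top" "0 < e" "\<forall>j<length (snd c). 2 * e \<le> t j \<and> t j \<le> 1 - 2 * e"
  shows "(c, t) \<in> chart op act e t c"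
proof -
  have none: "\<forall>j<length (snd c). round_coord e (t j) = None"
    using assms(2,3) by (auto simp: round_coord_def)
  then have "round_pattern e t (length (snd c)) = replicate (length (snd c)) None"
    by (intro nth_equalityI) simp_all
  moreover have "kept_coords e t (length (snd c)) = map t [0..<length (snd c)]"
    using none by (simp add: kept_coords_eq)
  ultimately show ?thesis
    using assms(1,2) collapse_replicate_None[of op act "snd c" "fst c"]
    by (simp add: chart_def rounded_cell_def near_coords_def)
qed

lemma chart_locally_constant_pattern:
  assumes e: "0 < e" "e < 1/2" and t: "\<forall>m<length (snd c). 2 * e \<le> t m \<and> t m \<le> 1 - 2 * e"
    and d: "(d, u0) \<in> chart op act e t c"
  shows "\<exists>W. openin (cube_top (length (snd d))) W \<and> u0 \<in> W \<and>
    (\<forall>u\<in>W. (d, u) \<in> chart op act e t c \<and>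
       round_pattern e u (length (snd d)) = round_pattern e u0 (length (snd d)))"
proof -
  let ?n = "length (snd d)"
  have "u0 \<in> cube ?n" "near_coords e t (length (snd c)) (kept_coords e u0 ?n)"
    using d by (auto simp: chart_def topspace_cells_top rounded_cell_def)
  then obtain W where W: "openin (cube_top ?n) W" "u0 \<in> W"
    "\<forall>u\<in>W. round_pattern e u ?n = round_pattern e u0 ?n \<and>
       near_coords e t (length (snd c)) (kept_coords e u ?n)"
    using round_pattern_locally_constant[OF e t] by blast
  have "(d, u) \<in> chart op act e t c" if "u \<in> W" for u
  proof -
    have "u \<in> cube ?n" using openin_subset[OF W(1)] that by auto
    moreover have "round_pattern e u ?n = round_pattern e u0 ?n"
      "near_coords e t (length (snd c)) (kept_coords e u ?n)"
      using W(3) that by auto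
    ultimately show ?thesis
      using d by (simp add: chart_def topspace_cells_top rounded_cell_def)
  qed
  with W show ?thesis by blast
qed

lemma openin_chart:
  fixes op :: "'r \<Rightarrow> 'r \<Rightarrow> 'r" and act :: "'y \<Rightarrow> 'r \<Rightarrow> 'y"
  assumes e: "0 < e" "e < 1/2" and t: "\<forall>m<length (snd c). 2 * e \<le> t m \<and> t m \<le> 1 - 2 * e"
  shows "openin cells_top (chart op act e t c)"
proof -
  have "openin (cube_top (length (snd d))) {u. (d, u) \<in> chart op act e t c}" for d :: "'y \<times> 'r list"
  proof (subst openin_subopen, intro ballI)
    fix u0 assume "u0 \<in> {u. (d, u) \<in> chart op act e t c}"
    then have "(d, u0) \<in> chart op act e t c" by simp
    then obtain W where "openin (cube_top (length (snd d))) W" "u0 \<in> W"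
      "\<forall>u\<in>W. (d, u) \<in> chart op act e t c"
      using chart_locally_constant_pattern[OF e t] by meson
    then show "\<exists>T. openin (cube_top (length (snd d))) T \<and> u0 \<in> T \<and> T \<subseteq> {u. (d, u) \<in> chart op act e t c}"
      by auto
  qed
  then show ?thesis
    by (simp add: openin_cells_top chart_subset_topspace)
qed

lemma openin_rack_space_chart:
  assumes "rack op" "rack_action op act" "0 < e" "e < 1/2"
    and "\<forall>m<length (snd c). 2 * e \<le> t m \<and> t m \<le> 1 - 2 * e"
  shows "openin (rack_space op act) (eq_class cells_top (nerve_equiv op act) ` chart op act e t c)"
  unfolding rack_space_def
  using openin_quotient_topology_image[OF nerve_equiv_equivp chart_subset_topspace]
    chart_closed_nerve_equiv[OF assms(1-4)] openin_chart[OF assms(3-5)]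
  by blast

lemma eq_class_mem_image_chart_iff:
  assumes "rack op" "rack_action op act" "0 < e" "e < 1/2" "a \<in> topspace cells_top"
  shows "eq_class cells_top (nerve_equiv op act) a \<in> eq_class cells_top (nerve_equiv op act) ` chart op act e t c
    \<longleftrightarrow> a \<in> chart op act e t c"
proof -
  have "{x \<in> topspace cells_top. eq_class cells_top (nerve_equiv op act) x
      \<in> eq_class cells_top (nerve_equiv op act) ` chart op act e t c} = chart op act e t c"
    by (rule eq_class_preimage_image[OF nerve_equiv_equivp chart_subset_topspace])
      (use chart_closed_nerve_equiv[OF assms(1-4)] in blast)
  then show ?thesis using assms(5) by blast
qed

lemma exists_chart_around:
  assumes "b \<in> topspace (rack_space op act)"
  shows "\<exists>y cl t e. 0 < e \<and> e < 1/2 \<and> (\<forall>j<length cl. 2 * e \<le> t j \<and> t j \<le> 1 - 2 * e) \<and>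
    b \<in> eq_class cells_top (nerve_equiv op act) ` chart op act e t (y, cl)"
proof -
  obtain a0 where a0: "a0 \<in> topspace cells_top" "b = eq_class cells_top (nerve_equiv op act) a0"
    using assms by (auto simp: rack_space_def topspace_quotient_topology)
  obtain a where a: "nerve_equiv op act a0 a" "a \<in> topspace cells_top"
    "\<forall>j<cell_dim a. 0 < snd a j \<and> snd a j < 1"
    using exists_interior_representative[OF a0(1)] by blast
  obtain y cl t where a_eq: "a = ((y, cl), t)"
    by (metis prod.collapse)
  obtain e where e: "0 < e" "e < 1/2" and t: "\<forall>j<length cl. 2 * e \<le> t j \<and> t j \<le> 1 - 2 * e"
    using exists_margin[of "length cl" t] a(3) by (auto simp: a_eq)
  have "a \<in> chart op act e t (y, cl)"
    using mem_chart_self[of "(y, cl)" t e op act] a(2) e t by (simp add: a_eq)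
  moreover have "b = eq_class cells_top (nerve_equiv op act) a"
    using a0 a eq_class_eq_iff[OF nerve_equiv_equivp a0(1) a(2)] by simp
  ultimately show ?thesis
    using e t by blast
qed

section \<open>Crossed modules of racks\<close>

definition lift_cell :: "('x \<Rightarrow> 'r \<Rightarrow> 'x) \<Rightarrow> real \<Rightarrow> 'x
    \<Rightarrow> ('r \<times> 'r list) \<times> (nat \<Rightarrow> real) \<Rightarrow> ('x \<times> 'r list) \<times> (nat \<Rightarrow> real)" where
  "lift_cell act e z a =
     ((inv (\<lambda>x. collapse_vertex act x (snd (fst a)) (round_pattern e (snd a) (cell_dim a))) z, snd (fst a)), snd a)"

locale crossed_module =
  fixes op :: "'r \<Rightarrow> 'r \<Rightarrow> 'r" and act :: "'x \<Rightarrow> 'r \<Rightarrow> 'x" and p :: "'x \<Rightarrow> 'r"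
  assumes rack: "rack op" and action: "rack_action op act"
    and equivariant: "\<And>x r. p (act x r) = op (p x) r"
begin

abbreviation quot_X :: "('x \<times> 'r list) \<times> (nat \<Rightarrow> real) \<Rightarrow> (('x \<times> 'r list) \<times> (nat \<Rightarrow> real)) set" where
  "quot_X \<equiv> eq_class cells_top (nerve_equiv op act)"

abbreviation quot_R :: "('r \<times> 'r list) \<times> (nat \<Rightarrow> real) \<Rightarrow> (('r \<times> 'r list) \<times> (nat \<Rightarrow> real)) set" where
  "quot_R \<equiv> eq_class cells_top (nerve_equiv op op)"

lemma self_action: "rack_action op op"
  using rack by (rule rack_action_self)

lemma glue_map_vertex: "glue op act a b \<Longrightarrow> glue op op (apfst (apfst p) a) (apfst (apfst p) b)"
  unfolding glue_def by (auto simp: face0_def face1_def equivariant)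

lemma nerve_equiv_map_vertex:
  "nerve_equiv op act a b \<Longrightarrow> nerve_equiv op op (apfst (apfst p) a) (apfst (apfst p) b)"
  unfolding nerve_equiv_def
proof (induction rule: rtranclp_induct)
  case (step b c)
  then show ?case
    using glue_map_vertex by (metis (mono_tags, lifting) rtranclp.rtrancl_into_rtrancl)
qed simp

lemma map_vertex_in_topspace: "a \<in> topspace cells_top \<Longrightarrow> apfst (apfst p) a \<in> topspace cells_top"
  by (simp add: topspace_cells_top apfst_def map_prod_def split_def)

lemma continuous_map_vertex:
  "continuous_map (cells_top :: (('x \<times> 'r list) \<times> (nat \<Rightarrow> real)) topology) cells_top (apfst (apfst p))"
  unfolding continuous_map_def
proof (intro conjI allI impI)
  show "apfst (apfst p) \<in> topspace cells_top \<rightarrow> topspace cells_top"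
    using map_vertex_in_topspace by blast
  fix U :: "(('r \<times> 'r list) \<times> (nat \<Rightarrow> real)) set"
  assume U: "openin cells_top U"
  show "openin cells_top {a \<in> topspace cells_top. apfst (apfst p) a \<in> U}"
    unfolding openin_cells_top
  proof (intro conjI allI)
    fix c :: "'x \<times> 'r list"
    have "{u. (c, u) \<in> {a \<in> topspace cells_top. apfst (apfst p) a \<in> U}} = {u. (apfst p c, u) \<in> U}"
      using U by (auto simp: topspace_cells_top openin_cells_top)
    moreover have "openin (cube_top (length (snd c))) {u. (apfst p c, u) \<in> U}"
      using U unfolding openin_cells_top by (metis snd_apfst)
    ultimately show "openin (cube_top (length (snd c))) {u. (c, u) \<in> {a \<in> topspace cells_top. apfst (apfst p) a \<in> U}}"
      by simp
  qed auto
qed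

lemma realize_map_quot:
  assumes "a \<in> topspace cells_top"
  shows "realize_map op op p (quot_X a) = quot_R (apfst (apfst p) a)"
proof -
  define a' where "a' = (SOME a'. a' \<in> quot_X a)"
  have a': "a' \<in> topspace cells_top" "nerve_equiv op act a a'"
    using some_mem_eq_class[OF nerve_equiv_equivp assms] by (simp_all add: a'_def)
  then have "quot_R (apfst (apfst p) a') = quot_R (apfst (apfst p) a)"
    using eq_class_eq_iff[OF nerve_equiv_equivp map_vertex_in_topspace map_vertex_in_topspace]
      nerve_equiv_map_vertex assms
    by (metis nerve_equiv_equivp)
  then show ?thesis
    by (simp add: realize_map_def a'_def[symmetric] Let_def apfst_def map_prod_def split_def)
qed

lemma continuous_realize_map: "continuous_map (rack_space op act) (rack_space op op) (realize_map op op p)"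
proof (rule continuous_compose_quotient_map)
  show "quotient_map cells_top (rack_space op act) quot_X"
    unfolding rack_space_def by (rule quotient_map_eq_class)
  have "continuous_map cells_top (rack_space op op) (quot_R \<circ> apfst (apfst p))"
    unfolding rack_space_def
    by (rule continuous_map_compose[OF continuous_map_vertex quotient_imp_continuous_map[OF quotient_map_eq_class]])
  then show "continuous_map cells_top (rack_space op op) (realize_map op op p \<circ> quot_X)"
    by (rule continuous_map_eq) (simp add: realize_map_quot)
qed

lemma p_collapse_vertex: "p (collapse_vertex act x rs pat) = collapse_vertex op (p x) rs pat"
  by (rule collapse_vertex_equivariant) (rule equivariant)

lemma rounded_cell_map_vertex:
  "rounded_cell op op e (apfst (apfst p) a) = apfst (apfst p) (rounded_cell op act e a)"
  by (simp add: rounded_cell_def collapse_def p_collapse_vertex apfst_def map_prod_def split_def)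

lemma map_vertex_mem_chart_iff:
  assumes "a \<in> topspace cells_top"
  shows "apfst (apfst p) a \<in> chart op op e t (r, cl) \<longleftrightarrow> (\<exists>z. p z = r \<and> a \<in> chart op act e t (z, cl))"
proof -
  obtain z0 cl0 ks where rc: "rounded_cell op act e a = ((z0, cl0), ks)"
    by (metis prod.collapse)
  then have "rounded_cell op op e (apfst (apfst p) a) = ((p z0, cl0), ks)"
    by (simp add: rounded_cell_map_vertex)
  with rc show ?thesis
    using assms map_vertex_in_topspace[OF assms] by (auto simp: chart_def)
qed

lemma lift_cell_in_chart:
  assumes "a \<in> chart op op e t (p z, cl)"
  shows "lift_cell act e z a \<in> chart op act e t (z, cl)" and "apfst (apfst p) (lift_cell act e z a) = a"
proof -
  obtain r rs u where a: "a = ((r, rs), u)" by (metis prod.collapse)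
  define f where "f = (\<lambda>x. collapse_vertex act x rs (round_pattern e u (length rs)))"
  have lift: "lift_cell act e z a = ((inv f z, rs), u)"
    by (simp add: lift_cell_def a f_def)
  have "bij f"
    unfolding f_def by (rule bij_collapse_vertex[OF action])
  then have "f (inv f z) = z"
    by (meson bij_is_surj surj_f_inv_f)
  moreover have "collapse_vertex op r rs (round_pattern e u (length rs)) = p z"
    using assms by (simp add: chart_def rounded_cell_def collapse_def a)
  ultimately have "collapse_vertex op (p (inv f z)) rs (round_pattern e u (length rs))
      = collapse_vertex op r rs (round_pattern e u (length rs))"
    unfolding f_def by (metis p_collapse_vertex)
  then have "p (inv f z) = r"
    using bij_collapse_vertex[OF self_action] by (auto simp: bij_def inj_def)
  then show "apfst (apfst p) (lift_cell act e z a) = a"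
    unfolding lift by (simp add: a)
  show "lift_cell act e z a \<in> chart op act e t (z, cl)"
    using assms \<open>f (inv f z) = z\<close> unfolding lift
    by (simp add: chart_def rounded_cell_def collapse_def topspace_cells_top f_def a)
qed

lemma lift_cell_map_vertex:
  assumes "a \<in> chart op act e t (z, cl)"
  shows "lift_cell act e z (apfst (apfst p) a) = a"
proof -
  obtain x rs u where a: "a = ((x, rs), u)" by (metis prod.collapse)
  define f where "f = (\<lambda>x. collapse_vertex act x rs (round_pattern e u (length rs)))"
  have "f x = z"
    using assms by (simp add: chart_def rounded_cell_def collapse_def a f_def)
  moreover have "inj f"
    unfolding f_def by (rule bij_is_inj[OF bij_collapse_vertex[OF action]])
  ultimately have "inv f z = x"
    using inv_f_f by metis
  then show ?thesis
    by (simp add: lift_cell_def a f_def)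
qed

lemma glue_lift:
  assumes "glue op op (apfst (apfst p) a) b"
  shows "\<exists>b'. glue op act a b' \<and> apfst (apfst p) b' = b"
proof -
  obtain x rs u where a: "a = ((x, rs), u)" by (metis prod.collapse)
  from assms obtain i where i: "i < length rs" "u \<in> cube (length rs)"
    and cases: "(u i = 0 \<and> b = (face0 i (p x, rs), del_coord i u)) \<or>
         (u i = 1 \<and> b = (face1 op op i (p x, rs), del_coord i u))"
    unfolding glue_def a by auto
  define b' where "b' = (if u i = 0 then face0 i (x, rs) else face1 op act i (x, rs), del_coord i u)"
  have "glue op act a b'"
    unfolding glue_def b'_def a using i cases by auto
  moreover have "apfst (apfst p) b' = b"
    using cases unfolding b'_def by (auto simp: face0_def face1_def equivariant)
  ultimately show ?thesis by blast
qed

lemma chart_closed_base: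
  "0 < e \<Longrightarrow> e < 1/2 \<Longrightarrow> a \<in> chart op op e t c \<Longrightarrow> nerve_equiv op op a b \<Longrightarrow> b \<in> chart op op e t c"
  by (rule chart_closed_nerve_equiv[OF rack self_action])

lemma chart_closed_total:
  "0 < e \<Longrightarrow> e < 1/2 \<Longrightarrow> a \<in> chart op act e t c \<Longrightarrow> nerve_equiv op act a b \<Longrightarrow> b \<in> chart op act e t c"
  by (rule chart_closed_nerve_equiv[OF rack action])

lemma glue_lift_cell:
  assumes e: "0 < e" "e < 1/2" and a: "a \<in> chart op op e t (p z, cl)" and glue: "glue op op a b"
  shows "glue op act (lift_cell act e z a) (lift_cell act e z b)"
proof -
  obtain b' where b': "glue op act (lift_cell act e z a) b'" "apfst (apfst p) b' = b"
    using glue_lift[of "lift_cell act e z a" b] glue lift_cell_in_chart(2)[OF a] by auto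
  have "nerve_equiv op act (lift_cell act e z a) b'"
    unfolding nerve_equiv_def using b'(1) by (intro r_into_rtranclp) simp
  then have "b' \<in> chart op act e t (z, cl)"
    using chart_closed_total[OF e lift_cell_in_chart(1)[OF a]] by blast
  then have "lift_cell act e z b = b'"
    using lift_cell_map_vertex b'(2) by blast
  with b'(1) show ?thesis by simp
qed

lemma nerve_equiv_lift_cell:
  assumes e: "0 < e" "e < 1/2" and a: "a \<in> chart op op e t (p z, cl)"
    and "nerve_equiv op op a b"
  shows "nerve_equiv op act (lift_cell act e z a) (lift_cell act e z b)"
  using assms(4) unfolding nerve_equiv_def
proof (induction rule: rtranclp_induct)
  case (step b c)
  have "nerve_equiv op op a b" "nerve_equiv op op b c"
    using step.hyps unfolding nerve_equiv_def by (simp_all add: r_into_rtranclp)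
  then have "b \<in> chart op op e t (p z, cl)" "c \<in> chart op op e t (p z, cl)"
    using chart_closed_base[OF e] a by blast+
  then have "glue op act (lift_cell act e z b) (lift_cell act e z c) \<or>
      glue op act (lift_cell act e z c) (lift_cell act e z b)"
    using step.hyps(2) glue_lift_cell[OF e] by blast
  with step.IH show ?case
    by (simp add: rtranclp.rtrancl_into_rtrancl)
qed simp

lemma lift_cell_locally_constant_vertex:
  assumes e: "0 < e" "e < 1/2" and t: "\<forall>m<length cl. 2 * e \<le> t m \<and> t m \<le> 1 - 2 * e"
    and d: "(d, u0) \<in> chart op op e t (p z, cl)"
  shows "\<exists>W. openin (cube_top (length (snd d))) W \<and> u0 \<in> W \<and>
    (\<forall>u\<in>W. (d, u) \<in> chart op op e t (p z, cl) \<and>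
       lift_cell act e z (d, u) = ((fst (fst (lift_cell act e z (d, u0))), snd d), u))"
proof -
  obtain W where W: "openin (cube_top (length (snd d))) W" "u0 \<in> W"
    "\<forall>u\<in>W. (d, u) \<in> chart op op e t (p z, cl) \<and>
       round_pattern e u (length (snd d)) = round_pattern e u0 (length (snd d))"
    using chart_locally_constant_pattern[OF e _ d] t by auto
  have "lift_cell act e z (d, u) = ((fst (fst (lift_cell act e z (d, u0))), snd d), u)" if "u \<in> W" for u
    using W(3) that by (simp add: lift_cell_def)
  with W show ?thesis by blast
qed

lemma continuous_lift_cell:
  assumes e: "0 < e" "e < 1/2" and t: "\<forall>m<length cl. 2 * e \<le> t m \<and> t m \<le> 1 - 2 * e"
  shows "continuous_map (subtopology cells_top (chart op op e t (p z, cl))) cells_top (lift_cell act e z)"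
  unfolding continuous_map_def
proof (intro conjI allI impI)
  let ?A = "chart op op e t (p z, cl)"
  show "lift_cell act e z \<in> topspace (subtopology cells_top ?A) \<rightarrow> topspace cells_top"
  proof
    fix a assume "a \<in> topspace (subtopology cells_top ?A)"
    then have "lift_cell act e z a \<in> chart op act e t (z, cl)"
      by (simp add: lift_cell_in_chart(1))
    then show "lift_cell act e z a \<in> topspace cells_top"
      using chart_subset_topspace by blast
  qed
  fix U :: "(('x \<times> 'r list) \<times> (nat \<Rightarrow> real)) set"
  assume U: "openin cells_top U"
  let ?S = "{a \<in> ?A. lift_cell act e z a \<in> U}"
  have "openin (cube_top (length (snd d))) {u. (d, u) \<in> ?S}" for d :: "'r \<times> 'r list"
  proof (subst openin_subopen, intro ballI)
    fix u0 assume "u0 \<in> {u. (d, u) \<in> ?S}"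
    then have u0: "(d, u0) \<in> ?A" "lift_cell act e z (d, u0) \<in> U" by auto
    define x0 where "x0 = fst (fst (lift_cell act e z (d, u0)))"
    obtain W where W: "openin (cube_top (length (snd d))) W" "u0 \<in> W"
      "\<forall>u\<in>W. (d, u) \<in> ?A \<and> lift_cell act e z (d, u) = ((x0, snd d), u)"
      using lift_cell_locally_constant_vertex[OF e t u0(1)] unfolding x0_def by blast
    have "openin (cube_top (length (snd d))) {u. ((x0, snd d), u) \<in> U}"
      using U unfolding openin_cells_top by (metis snd_conv)
    then have "openin (cube_top (length (snd d))) (W \<inter> {u. ((x0, snd d), u) \<in> U})"
      using W(1) by blast
    moreover have "u0 \<in> W \<inter> {u. ((x0, snd d), u) \<in> U}"
      using W(2,3) u0(2) by simp
    moreover have "W \<inter> {u. ((x0, snd d), u) \<in> U} \<subseteq> {u. (d, u) \<in> ?S}"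
    proof
      fix u assume "u \<in> W \<inter> {u. ((x0, snd d), u) \<in> U}"
      then show "u \<in> {u. (d, u) \<in> ?S}"
        using W(3) by simp
    qed
    ultimately show "\<exists>T. openin (cube_top (length (snd d))) T \<and> u0 \<in> T \<and> T \<subseteq> {u. (d, u) \<in> ?S}"
      by blast
  qed
  moreover have "?S \<subseteq> topspace cells_top"
    using chart_subset_topspace[of op op e t "(p z, cl)"] by blast
  ultimately have "openin cells_top ?S"
    unfolding openin_cells_top by blast
  moreover have "{a \<in> topspace (subtopology cells_top ?A). lift_cell act e z a \<in> U} = ?A \<inter> ?S"
    using chart_subset_topspace[of op op e t "(p z, cl)"] by auto
  ultimately show "openin (subtopology cells_top ?A) {a \<in> topspace (subtopology cells_top ?A). lift_cell act e z a \<in> U}"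
    by (simp add: openin_subtopology_Int2)
qed

lemma realize_map_preimage_chart:
  assumes e: "0 < e" "e < 1/2"
  shows "{y \<in> topspace (rack_space op act). realize_map op op p y \<in> quot_R ` chart op op e t (r, cl)}
    = (\<Union>z\<in>{z. p z = r}. quot_X ` chart op act e t (z, cl))"
proof -
  have iff: "realize_map op op p (quot_X a) \<in> quot_R ` chart op op e t (r, cl) \<longleftrightarrow>
      (\<exists>z. p z = r \<and> a \<in> chart op act e t (z, cl))"
    if a: "a \<in> topspace cells_top" for a
    using realize_map_quot[OF a] map_vertex_mem_chart_iff[OF a]
      eq_class_mem_image_chart_iff[OF rack self_action e map_vertex_in_topspace[OF a]]
    by simp
  show ?thesis
  proof (intro set_eqI iffI)
    fix y assume "y \<in> {y \<in> topspace (rack_space op act). realize_map op op p y \<in> quot_R ` chart op op e t (r, cl)}"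
    then obtain a where a: "a \<in> topspace cells_top" "y = quot_X a"
      and "realize_map op op p (quot_X a) \<in> quot_R ` chart op op e t (r, cl)"
      by (auto simp: rack_space_def topspace_quotient_topology)
    then show "y \<in> (\<Union>z\<in>{z. p z = r}. quot_X ` chart op act e t (z, cl))"
      using iff by blast
  next
    fix y assume "y \<in> (\<Union>z\<in>{z. p z = r}. quot_X ` chart op act e t (z, cl))"
    then obtain z a where a: "p z = r" "a \<in> chart op act e t (z, cl)" "y = quot_X a"
      by blast
    then have "a \<in> topspace cells_top"
      using chart_subset_topspace by blast
    with a show "y \<in> {y \<in> topspace (rack_space op act). realize_map op op p y \<in> quot_R ` chart op op e t (r, cl)}"
      using iff by (auto simp: rack_space_def topspace_quotient_topology)
  qed
qed

lemma sheets_disjoint: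
  assumes e: "0 < e" "e < 1/2" and "z1 \<noteq> z2"
  shows "disjnt (quot_X ` chart op act e t (z1, cl)) (quot_X ` chart op act e t (z2, cl))"
proof -
  have "quot_X a1 \<noteq> quot_X a2"
    if a: "a1 \<in> chart op act e t (z1, cl)" "a2 \<in> chart op act e t (z2, cl)" for a1 a2
  proof
    assume "quot_X a1 = quot_X a2"
    moreover have "a1 \<in> topspace cells_top" "a2 \<in> topspace cells_top"
      using a chart_subset_topspace by blast+
    ultimately have "nerve_equiv op act a1 a2"
      using eq_class_eq_iff[OF nerve_equiv_equivp] by blast
    then have "a2 \<in> chart op act e t (z1, cl)"
      using chart_closed_total[OF e a(1)] by blast
    with a(2) \<open>z1 \<noteq> z2\<close> show False
      by (simp add: chart_def)
  qed
  then show ?thesis by (auto simp: disjnt_def)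
qed

definition lift_class :: "real \<Rightarrow> 'x \<Rightarrow> (('r \<times> 'r list) \<times> (nat \<Rightarrow> real)) set
    \<Rightarrow> (('x \<times> 'r list) \<times> (nat \<Rightarrow> real)) set" where
  "lift_class e z C = quot_X (lift_cell act e z (SOME a. a \<in> C))"

lemma lift_class_quot:
  assumes e: "0 < e" "e < 1/2" and a: "a \<in> chart op op e t (p z, cl)"
  shows "lift_class e z (quot_R a) = quot_X (lift_cell act e z a)"
proof -
  define a' where "a' = (SOME a'. a' \<in> quot_R a)"
  have "a \<in> topspace cells_top"
    using a chart_subset_topspace by blast
  then have "nerve_equiv op op a a'"
    using some_mem_eq_class[OF nerve_equiv_equivp] unfolding a'_def by blast
  then have "a' \<in> chart op op e t (p z, cl)" "nerve_equiv op act (lift_cell act e z a) (lift_cell act e z a')"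
    using chart_closed_base[OF e a] nerve_equiv_lift_cell[OF e a] by blast+
  moreover have "lift_cell act e z a \<in> topspace cells_top" "lift_cell act e z a' \<in> topspace cells_top"
    using lift_cell_in_chart(1) a calculation(1) chart_subset_topspace by blast+
  ultimately show ?thesis
    unfolding lift_class_def a'_def[symmetric] by (metis eq_class_eq_iff nerve_equiv_equivp)
qed

lemma lift_class_realize_map:
  assumes e: "0 < e" "e < 1/2" and a: "a \<in> chart op act e t (z, cl)"
  shows "lift_class e z (realize_map op op p (quot_X a)) = quot_X a"
proof -
  have a_top: "a \<in> topspace cells_top"
    using a chart_subset_topspace[of op act e t "(z, cl)"] by blast
  then have "apfst (apfst p) a \<in> chart op op e t (p z, cl)"
    using map_vertex_mem_chart_iff a by blast
  then show ?thesis
    by (simp add: realize_map_quot[OF a_top] lift_class_quot[OF e] lift_cell_map_vertex[OF a])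
qed

lemma realize_map_lift_class:
  assumes e: "0 < e" "e < 1/2" and a: "a \<in> chart op op e t (p z, cl)"
  shows "realize_map op op p (lift_class e z (quot_R a)) = quot_R a"
proof -
  have "lift_cell act e z a \<in> topspace cells_top"
    using lift_cell_in_chart(1)[OF a] chart_subset_topspace[of op act e t "(z, cl)"] by blast
  then show ?thesis
    by (simp add: lift_class_quot[OF e a] realize_map_quot lift_cell_in_chart(2)[OF a])
qed

lemma continuous_realize_map_sheet:
  assumes e: "0 < e" "e < 1/2"
  shows "continuous_map (subtopology (rack_space op act) (quot_X ` chart op act e t (z, cl)))
      (subtopology (rack_space op op) (quot_R ` chart op op e t (p z, cl))) (realize_map op op p)"
proof -
  have "realize_map op op p y \<in> quot_R ` chart op op e t (p z, cl)"
    if "y \<in> topspace (subtopology (rack_space op act) (quot_X ` chart op act e t (z, cl)))" for y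
  proof -
    have "y \<in> (\<Union>z'\<in>{z'. p z' = p z}. quot_X ` chart op act e t (z', cl))"
      using that by auto
    then have "y \<in> {y \<in> topspace (rack_space op act). realize_map op op p y \<in> quot_R ` chart op op e t (p z, cl)}"
      by (subst realize_map_preimage_chart[OF e])
    then show ?thesis by simp
  qed
  then show ?thesis
    using continuous_map_from_subtopology[OF continuous_realize_map]
    by (auto simp: continuous_map_in_subtopology)
qed

lemma continuous_lift_class:
  assumes e: "0 < e" "e < 1/2" and t: "\<forall>m<length cl. 2 * e \<le> t m \<and> t m \<le> 1 - 2 * e"
  shows "continuous_map (subtopology (rack_space op op) (quot_R ` chart op op e t (p z, cl)))
      (subtopology (rack_space op act) (quot_X ` chart op act e t (z, cl))) (lift_class e z)"
proof (rule continuous_compose_quotient_map)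
  let ?A = "chart op op e t (p z, cl)" and ?U = "quot_X ` chart op act e t (z, cl)"
  have "{a \<in> topspace cells_top. quot_R a \<in> quot_R ` ?A} = ?A"
    by (rule eq_class_preimage_image[OF nerve_equiv_equivp chart_subset_topspace])
      (use chart_closed_base[OF e] in blast)
  then show "quotient_map (subtopology cells_top ?A) (subtopology (rack_space op op) (quot_R ` ?A)) quot_R"
    using openin_rack_space_chart[OF rack self_action e, of "(p z, cl)" t] t
    by (intro quotient_map_restriction) (simp_all add: rack_space_def quotient_map_eq_class)
  have "continuous_map (subtopology cells_top ?A) (rack_space op act) (quot_X \<circ> lift_cell act e z)"
    unfolding rack_space_def
    by (rule continuous_map_compose[OF continuous_lift_cell[OF e t]
          quotient_imp_continuous_map[OF quotient_map_eq_class]])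
  moreover have "(quot_X \<circ> lift_cell act e z) \<in> topspace (subtopology cells_top ?A) \<rightarrow> ?U"
  proof
    fix a assume "a \<in> topspace (subtopology cells_top ?A)"
    then show "(quot_X \<circ> lift_cell act e z) a \<in> ?U"
      unfolding o_def by (intro imageI lift_cell_in_chart(1)) simp
  qed
  ultimately have "continuous_map (subtopology cells_top ?A) (subtopology (rack_space op act) ?U)
      (quot_X \<circ> lift_cell act e z)"
    by (simp add: continuous_map_in_subtopology)
  then show "continuous_map (subtopology cells_top ?A) (subtopology (rack_space op act) ?U) (lift_class e z \<circ> quot_R)"
    by (rule continuous_map_eq) (simp add: lift_class_quot[where t = t and cl = cl, OF e])
qed

lemma sheet_homeomorphic:
  assumes e: "0 < e" "e < 1/2" and t: "\<forall>m<length cl. 2 * e \<le> t m \<and> t m \<le> 1 - 2 * e"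
  shows "homeomorphic_maps (subtopology (rack_space op act) (quot_X ` chart op act e t (z, cl)))
      (subtopology (rack_space op op) (quot_R ` chart op op e t (p z, cl)))
      (realize_map op op p) (lift_class e z)"
  unfolding homeomorphic_maps_def
  using continuous_realize_map_sheet[OF e] continuous_lift_class[OF e t]
    lift_class_realize_map[OF e] realize_map_lift_class[OF e]
  by auto

lemma evenly_covered:
  assumes "b \<in> topspace (rack_space op op)"
  shows "\<exists>T. b \<in> T \<and> openin (rack_space op op) T \<and>
    (\<exists>\<V>. \<Union>\<V> = {y \<in> topspace (rack_space op act). realize_map op op p y \<in> T} \<and>
       (\<forall>U \<in> \<V>. openin (rack_space op act) U) \<and> pairwise disjnt \<V> \<and>
       (\<forall>U \<in> \<V>. \<exists>q. homeomorphic_maps (subtopology (rack_space op act) U)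
          (subtopology (rack_space op op) T) (realize_map op op p) q))"
proof -
  obtain r cl t e where e: "0 < e" "e < 1/2" and t: "\<forall>j<length cl. 2 * e \<le> t j \<and> t j \<le> 1 - 2 * e"
    and b: "b \<in> quot_R ` chart op op e t (r, cl)"
    using exists_chart_around[OF assms] by blast
  define \<V> where "\<V> = (\<lambda>z. quot_X ` chart op act e t (z, cl)) ` {z. p z = r}"
  have "pairwise disjnt \<V>"
  proof (rule pairwiseI)
    fix U1 U2 assume "U1 \<in> \<V>" "U2 \<in> \<V>" "U1 \<noteq> U2"
    then obtain z1 z2 where "U1 = quot_X ` chart op act e t (z1, cl)" "U2 = quot_X ` chart op act e t (z2, cl)"
      "z1 \<noteq> z2"
      by (auto simp: \<V>_def)
    then show "disjnt U1 U2"
      by (simp add: sheets_disjoint[OF e])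
  qed
  moreover have "openin (rack_space op op) (quot_R ` chart op op e t (r, cl))"
    using openin_rack_space_chart[OF rack self_action e] t by simp
  moreover have "\<forall>U \<in> \<V>. openin (rack_space op act) U"
    using openin_rack_space_chart[OF rack action e] t by (auto simp: \<V>_def)
  moreover have "\<Union>\<V> = {y \<in> topspace (rack_space op act). realize_map op op p y \<in> quot_R ` chart op op e t (r, cl)}"
    using realize_map_preimage_chart[OF e] by (simp add: \<V>_def)
  moreover have "\<forall>U \<in> \<V>. \<exists>q. homeomorphic_maps (subtopology (rack_space op act) U)
      (subtopology (rack_space op op) (quot_R ` chart op op e t (r, cl))) (realize_map op op p) q"
    using sheet_homeomorphic[OF e t] by (auto simp: \<V>_def)
  ultimately show ?thesis
    using b by blast
qed

end

theorem mainTheorem6: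
  fixes op :: "'r \<Rightarrow> 'r \<Rightarrow> 'r" and act :: "'x \<Rightarrow> 'r \<Rightarrow> 'x" and p :: "'x \<Rightarrow> 'r"
  assumes "rack op"
    and "rack_action op act"
    and "\<And>x r. p (act x r) = op (p x) r"
    and "path_connected_space (rack_space op op)"
    and "locally_path_connected_space (rack_space op op)"
  shows "covering_map (rack_space op act) (rack_space op op) (realize_map op op p)"
proof -
  interpret crossed_module op act p
    using assms(1-3) by unfold_locales
  show ?thesis
    unfolding covering_map_def using continuous_realize_map evenly_covered by blast
qed

end
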